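(* Let $a\in\mathbb{R}$ and $b>0$. The equation $g(x)+g(x+a)+g(x+b)=0$ ($x\in\mathbb{R}$) admits a continuous periodic solution $g:\mathbb{R}\to\mathbb{R}$ that is not identically zero if and only if $$\frac{a}{b}\in\left\{\frac{2+3k}{1+3m},\ \frac{1+3m}{2+3k}:\ (m,k)\in\mathbb{Z}^2\right\}.$$ In particular, if $a/b\notin\mathbb{Q}$ then the equation admits no nonzero continuous periodic solution, and there are infinitely many rational numbers $p/q$ such that $a/b=p/q$ implies the equation admits no nonzero continuous periodic solution. *)

theory Defs
  imports Complex_Main
begin

definition periodic_fun :: "(real \<Rightarrow> real) \<Rightarrow> bool" where
  "periodic_fun g \<longleftrightarrow> (\<exists>T>0. \<forall>x. g (x + T) = g x)"

definition has_nonzero_cont_periodic_sol :: "real \<Rightarrow> real \<Rightarrow> bool" where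
  "has_nonzero_cont_periodic_sol a b \<longleftrightarrow>
     (\<exists>g::real \<Rightarrow> real. continuous_on UNIV g \<and> periodic_fun g \<and> (\<exists>x. g x \<noteq> 0) \<and>
        (\<forall>x. g x + g (x + a) + g (x + b) = 0))"

definition ratio_set :: "real set" where
  "ratio_set = {r. \<exists>m k :: int. r = (2 + 3 * of_int k) / (1 + 3 * of_int m)
                              \<or> r = (1 + 3 * of_int m) / (2 + 3 * of_int k)}"

end

theory Submission
  imports Defs "HOL-Analysis.Analysis" "HOL-Library.Periodic_Fun"
begin

(* For a continuous T-periodic g and n \<in> \<int> let c_n(g) be its n-th Fourier
   coefficient.  Shifting g by d multiplies c_n(g) by cis(-2\<pi>nd/T), so the functional
   equation g(x) + g(x+a) + g(x+b) = 0 gives (1 + cis(la) + cis(lb)) c_n(g) = 0 with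
   l = -2\<pi>n/T.  A nonzero continuous periodic g has some nonzero coefficient (uniqueness
   of Fourier coefficients, proved via the even function g(s+x) + g(s-x), which is a
   continuous function of cos(2\<pi>x/T), and the Weierstrass approximation theorem), hence
   some real l with 1 + cis(la) + cis(lb) = 0.  Conversely such an l yields the solution
   cos(lx).  So solvability is equivalent to the existence of a frequency l with
   1 + cis(la) + cis(lb) = 0, i.e. {la, lb} \<equiv> {2\<pi>/3, -2\<pi>/3} modulo 2\<pi>, which is
   equivalent to a/b \<in> ratio_set.  The set ratio_set consists of rationals and contains
   no multiple of 3, which gives the two remaining claims. *)

section \<open>Integrals of periodic functions\<close>

lemma periodic_integral_shift:
  fixes h :: "real \<Rightarrow> 'a::euclidean_space"
  assumes T: "T > 0" and cont: "continuous_on UNIV h" and per: "\<And>x. h (x + T) = h x"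
  shows "integral {0..T} (\<lambda>x. h (x + s)) = integral {0..T} h"
proof -
  interpret periodic_fun_simple h T by standard (rule per)
  define r where "r = s - of_int \<lfloor>s / T\<rfloor> * T"
  have r0: "0 \<le> r" and rT: "r < T"
    using T floor_divide_lower[OF T, of s] floor_divide_upper[OF T, of s]
    by (simp_all add: r_def algebra_simps)
  have hs: "h (x + s) = h (x + r)" for x
    using plus_of_int[of "x + r" "\<lfloor>s / T\<rfloor>"] by (simp add: r_def algebra_simps)
  have ci: "continuous_on S h" for S using cont continuous_on_subset by blast
  have "integral {0..T} (\<lambda>x. h (x + s)) = integral {r..T+r} h"
    using integral_shift[OF ci, of 0 T r] hs by (simp add: o_def)
  also have "\<dots> = integral {r..T} h + integral {T..T+r} h"
    using r0 rT
    by (intro Henstock_Kurzweil_Integration.integral_combine[symmetric]) (auto intro: integrable_continuous_interval ci)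
  also have "integral {T..T+r} h = integral {0..r} h"
    using integral_shift[OF ci, of 0 r T] by (simp add: o_def per add.commute)
  also have "integral {r..T} h + integral {0..r} h = integral {0..T} h"
    using r0 rT Henstock_Kurzweil_Integration.integral_combine[of 0 r T h] integrable_continuous_interval[OF ci]
    by (simp add: add.commute)
  finally show ?thesis .
qed

lemma periodic_integral_reflect:
  fixes h :: "real \<Rightarrow> 'a::euclidean_space"
  assumes T: "T > 0" and cont: "continuous_on UNIV h" and per: "\<And>x. h (x + T) = h x"
  shows "integral {0..T} (\<lambda>x. h (s - x)) = integral {0..T} h"
proof -
  have "integral {0..T} (\<lambda>x. h (s - x)) = integral {-T..0} (\<lambda>y. h (s + y))"
    using Henstock_Kurzweil_Integration.integral_reflect_real[of 0 "-T" "\<lambda>y. h (s + y)"] by simp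
  also have "\<dots> = integral {-T..0} ((\<lambda>y. h (y + (s - T))) \<circ> (\<lambda>x. x + T))"
    by (simp add: o_def algebra_simps)
  also have "\<dots> = integral {0..T} (\<lambda>y. h (y + (s - T)))"
    by (subst integral_shift) (auto intro!: continuous_intros continuous_on_compose2[OF cont])
  also have "\<dots> = integral {0..T} h" using periodic_integral_shift[OF T cont per, of "s - T"] .
  finally show ?thesis .
qed

section \<open>Fourier coefficients\<close>

definition fourier_coeff :: "real \<Rightarrow> (real \<Rightarrow> real) \<Rightarrow> int \<Rightarrow> complex" where
  "fourier_coeff T g n = integral {0..T} (\<lambda>x. complex_of_real (g x) * cis (2*pi * of_int n * x / T))"

lemma fourier_integrand_continuous:
  assumes "continuous_on UNIV g"
  shows "continuous_on UNIV (\<lambda>x. complex_of_real (g x) * cis (2*pi * of_int n * x / T))"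
  unfolding divide_inverse by (auto intro!: continuous_intros continuous_on_compose2[OF assms])

lemma fourier_integrand_integrable:
  assumes "continuous_on UNIV g"
  shows "(\<lambda>x. complex_of_real (g x) * cis (2*pi * of_int n * x / T)) integrable_on {a..b}"
  using fourier_integrand_continuous[OF assms] continuous_on_subset
  by (blast intro: integrable_continuous_interval)

lemma fourier_integrand_periodic:
  assumes T: "T \<noteq> 0" and per: "\<And>x. g (x + T) = g x"
  shows "complex_of_real (g (x + T)) * cis (2*pi * of_int n * (x + T) / T)
       = complex_of_real (g x) * cis (2*pi * of_int n * x / T)"
proof -
  have "2*pi * of_int n * (x + T) / T = 2*pi * of_int n * x / T + 2*pi * of_int n"
    using T by (simp add: field_simps)
  then show ?thesis by (simp add: per flip: cis_mult)
qed

lemma fourier_coeff_add: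
  assumes "continuous_on UNIV f" and "continuous_on UNIV g"
  shows "fourier_coeff T (\<lambda>x. f x + g x) n = fourier_coeff T f n + fourier_coeff T g n"
  unfolding fourier_coeff_def
  using integral_add[OF fourier_integrand_integrable[OF assms(1)] fourier_integrand_integrable[OF assms(2)]]
  by (simp add: distrib_right)

lemma fourier_coeff_shift:
  assumes T: "T > 0" and cont: "continuous_on UNIV g" and per: "\<And>x. g (x + T) = g x"
  shows "fourier_coeff T (\<lambda>x. g (x + d)) n = cis (-(2*pi * of_int n * d / T)) * fourier_coeff T g n"
proof -
  define k where "k = (\<lambda>y. complex_of_real (g y) * cis (2*pi * of_int n * y / T))"
  have twist: "complex_of_real (g (x + d)) * cis (2*pi * of_int n * x / T)
      = k (x + d) * cis (-(2*pi * of_int n * d / T))" for x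
  proof -
    have "2*pi * of_int n * (x + d) / T + -(2*pi * of_int n * d / T) = 2*pi * of_int n * x / T"
      using T by (simp add: field_simps)
    then show ?thesis unfolding k_def by (simp add: cis_mult mult.assoc)
  qed
  have "integral {0..T} (\<lambda>x. k (x + d)) = integral {0..T} k"
    using periodic_integral_shift[OF T] fourier_integrand_continuous[OF cont]
      fourier_integrand_periodic[of T g, OF _ per] T unfolding k_def by blast
  then have "fourier_coeff T (\<lambda>x. g (x + d)) n = fourier_coeff T g n * cis (-(2*pi * of_int n * d / T))"
    unfolding fourier_coeff_def twist integral_mult_left by (simp add: k_def)
  then show ?thesis by (simp add: mult.commute)
qed

lemma fourier_coeff_reflect:
  assumes T: "T > 0" and cont: "continuous_on UNIV g" and per: "\<And>x. g (x + T) = g x"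
  shows "fourier_coeff T (\<lambda>x. g (s - x)) n = cis (2*pi * of_int n * s / T) * fourier_coeff T g (-n)"
proof -
  define k where "k = (\<lambda>y. complex_of_real (g y) * cis (2*pi * of_int (-n) * y / T))"
  have twist: "complex_of_real (g (s - x)) * cis (2*pi * of_int n * x / T)
      = k (s - x) * cis (2*pi * of_int n * s / T)" for x
  proof -
    have "2*pi * of_int (-n) * (s - x) / T + 2*pi * of_int n * s / T = 2*pi * of_int n * x / T"
      using T by (simp add: field_simps)
    then show ?thesis unfolding k_def by (simp add: cis_mult mult.assoc)
  qed
  have "integral {0..T} (\<lambda>x. k (s - x)) = integral {0..T} k"
    using periodic_integral_reflect[OF T] fourier_integrand_continuous[OF cont]
      fourier_integrand_periodic[of T g, OF _ per] T unfolding k_def by blast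
  then have "fourier_coeff T (\<lambda>x. g (s - x)) n = fourier_coeff T g (-n) * cis (2*pi * of_int n * s / T)"
    unfolding fourier_coeff_def twist integral_mult_left by (simp add: k_def)
  then show ?thesis by (simp add: mult.commute)
qed

section \<open>Uniqueness of Fourier coefficients\<close>

text \<open>Expanding (cis t + cis (-t))^m / 2^m by the binomial theorem.\<close>
lemma cos_power_as_exponentials:
  "complex_of_real (cos t) ^ m =
     (\<Sum>j\<le>m. of_nat (m choose j) * cis (of_int (2 * int j - int m) * t)) / 2 ^ m"
proof -
  have "complex_of_real (cos t) = (cis t + cis (-t)) / 2"
    by (simp add: complex_eq_iff)
  then have "complex_of_real (cos t) ^ m = (cis t + cis (-t)) ^ m / 2 ^ m"
    by (simp only: power_divide)
  also have "(cis t + cis (-t)) ^ m = (\<Sum>j\<le>m. of_nat (m choose j) * cis t ^ j * cis (-t) ^ (m - j))"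
    by (rule binomial_ring)
  also have "\<dots> = (\<Sum>j\<le>m. of_nat (m choose j) * cis (of_int (2 * int j - int m) * t))"
  proof (rule sum.cong[OF refl])
    fix j assume "j \<in> {..m}"
    then have "real j * t + real (m - j) * (-t) = of_int (2 * int j - int m) * t"
      by (simp add: of_nat_diff algebra_simps)
    moreover have "cis t ^ j * cis (-t) ^ (m - j) = cis (real j * t + real (m - j) * (-t))"
      unfolding Complex.DeMoivre cis_mult ..
    ultimately show "of_nat (m choose j) * cis t ^ j * cis (-t) ^ (m - j)
             = of_nat (m choose j) * cis (of_int (2 * int j - int m) * t)"
      by (simp add: mult.assoc)
  qed
  finally show ?thesis .
qed

text \<open>A function all of whose Fourier coefficients vanish is orthogonal to every
  polynomial in cos(2\<pi>x/T), since the powers of cos(2\<pi>x/T) are finite combinations of the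
  exponentials cis(2\<pi>nx/T).\<close>
lemma zero_coeffs_orthogonal_to_cos_polynomials:
  fixes \<phi> :: "real \<Rightarrow> real"
  assumes T: "T > 0" and cont: "continuous_on UNIV \<phi>" and zero: "\<And>n. fourier_coeff T \<phi> n = 0"
    and P: "real_polynomial_function P"
  shows "integral {0..T} (\<lambda>x. \<phi> x * P (cos (2*pi*x/T))) = 0"
proof -
  have cont_on: "continuous_on S \<phi>" for S using cont continuous_on_subset by blast
  have monomial: "integral {0..T} (\<lambda>x. \<phi> x * cos (2*pi*x/T) ^ m) = 0" for m
  proof -
    define N where "N j = 2 * int j - int m" for j
    have expand: "complex_of_real (\<phi> x * cos (2*pi*x/T) ^ m) =
        (\<Sum>j\<le>m. complex_of_real (\<phi> x) * cis (2*pi * of_int (N j) * x / T) * of_nat (m choose j)) / 2 ^ m" for x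
      by (simp add: cos_power_as_exponentials N_def sum_distrib_left mult_ac)
    have "complex_of_real (integral {0..T} (\<lambda>x. \<phi> x * cos (2*pi*x/T) ^ m))
        = integral {0..T} (\<lambda>x. complex_of_real (\<phi> x * cos (2*pi*x/T) ^ m))"
      using T by (intro integral_linear[OF _ bounded_linear_of_real, unfolded o_def, symmetric]
          integrable_continuous_interval continuous_intros cont_on) auto
    also have "\<dots> = (\<Sum>j\<le>m. fourier_coeff T \<phi> (N j) * of_nat (m choose j)) / 2 ^ m"
      unfolding expand fourier_coeff_def
      by (subst integral_divide, subst integral_sum) (auto intro!: integrable_on_mult_left fourier_integrand_integrable[OF cont])
    also have "\<dots> = 0" by (simp add: zero)
    finally show ?thesis by simp
  qed
  obtain c k where P_sum: "P = (\<lambda>x. \<Sum>i\<le>k. c i * x ^ i)"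
    using P real_polynomial_function_iff_sum by blast
  have "integral {0..T} (\<lambda>x. \<phi> x * P (cos (2*pi*x/T)))
      = integral {0..T} (\<lambda>x. \<Sum>i\<le>k. c i * (\<phi> x * cos (2*pi*x/T) ^ i))"
    by (simp add: P_sum sum_distrib_left mult_ac)
  also have "\<dots> = (\<Sum>i\<le>k. c i * integral {0..T} (\<lambda>x. \<phi> x * cos (2*pi*x/T) ^ i))"
    by (subst integral_sum) (use T in \<open>auto intro!: integrable_continuous_interval continuous_intros cont_on\<close>)
  also have "\<dots> = 0" by (simp add: monomial)
  finally show ?thesis .
qed

lemma even_periodic_factors_through_cos:
  fixes \<phi> :: "real \<Rightarrow> real"
  assumes T: "T > 0" and cont: "continuous_on UNIV \<phi>"
    and even: "\<And>x. \<phi> (-x) = \<phi> x" and per: "\<And>x. \<phi> (x + T) = \<phi> x"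
  obtains F where "continuous_on {-1..1} F" and "\<And>x. \<phi> x = F (cos (2*pi*x/T))"
proof
  interpret periodic_fun_simple \<phi> T by standard (rule per)
  define F where "F y = \<phi> (arccos y * T / (2*pi))" for y
  have "continuous_on {-1..1} (\<lambda>y. arccos y * T / (2*pi))"
    by (intro continuous_intros continuous_on_arccos') auto
  then show "continuous_on {-1..1} F"
    unfolding F_def using continuous_on_compose2[OF cont] by blast
  fix x
  obtain k where k: "arccos (cos (2*pi*x/T)) = \<bar>2*pi*x/T - of_int k * (2*pi)\<bar>"
    by (rule arccos_cos_eq_abs_2pi)
  have "2*pi*x/T - of_int k * (2*pi) = (2*pi/T) * (x - of_int k * T)"
    using T by (simp add: field_simps)
  then have "\<bar>2*pi*x/T - of_int k * (2*pi)\<bar> = (2*pi/T) * \<bar>x - of_int k * T\<bar>"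
    using T by (simp add: abs_mult)
  then have "arccos (cos (2*pi*x/T)) * T / (2*pi) = \<bar>x - of_int k * T\<bar>"
    using k T by simp
  moreover have "\<phi> \<bar>x - of_int k * T\<bar> = \<phi> (x - of_int k * T)"
    using even[of "x - of_int k * T"] by (cases "x - of_int k * T \<ge> 0") auto
  moreover have "\<phi> (x - of_int k * T) = \<phi> x" by (rule minus_of_int)
  ultimately show "\<phi> x = F (cos (2*pi*x/T))" by (simp add: F_def)
qed

text \<open>Weierstrass step: if F \<circ> u is orthogonal on [a,b] to every polynomial in u, where F is
  continuous on a compact set containing the range of u, then approximating F within e by
  a polynomial P bounds the integral of the square of F \<circ> u, which equals the integral of
  (F \<circ> u)(F \<circ> u - P \<circ> u), by e times the integral of |F \<circ> u|.\<close>
lemma orthogonal_to_polynomials_square_integral_le: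
  fixes F u :: "real \<Rightarrow> real"
  assumes u: "continuous_on {a..b} u" "u ` {a..b} \<subseteq> K"
    and K: "compact K" and F: "continuous_on K F"
    and orth: "\<And>P. real_polynomial_function P \<Longrightarrow> integral {a..b} (\<lambda>x. F (u x) * P (u x)) = 0"
    and e: "e > 0"
  shows "integral {a..b} (\<lambda>x. F (u x) ^ 2) \<le> e * integral {a..b} (\<lambda>x. \<bar>F (u x)\<bar>)"
proof -
  define \<phi> where "\<phi> x = F (u x)" for x
  have cont: "continuous_on {a..b} \<phi>"
    unfolding \<phi>_def using continuous_on_compose2[OF F u(1) u(2)] .
  obtain P where P: "real_polynomial_function P" "\<And>y. y \<in> K \<Longrightarrow> \<bar>F y - P y\<bar> < e"
    using Stone_Weierstrass_real_polynomial_function[OF K F e] by blast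
  have int_P: "(\<lambda>x. \<phi> x * P (u x)) integrable_on {a..b}"
    by (intro integrable_continuous_interval continuous_intros cont
        continuous_on_compose2[OF continuous_on_polymonial_function[OF P(1)[unfolded real_polynomial_function_eq]] u(1)]) auto
  have int_sq: "(\<lambda>x. \<phi> x ^ 2) integrable_on {a..b}"
    and int_abs: "(\<lambda>x. e * \<bar>\<phi> x\<bar>) integrable_on {a..b}"
    by (auto intro!: integrable_continuous_interval continuous_intros cont)
  have bound: "\<phi> x ^ 2 \<le> e * \<bar>\<phi> x\<bar> + \<phi> x * P (u x)" if "x \<in> {a..b}" for x
  proof -
    have "\<bar>\<phi> x - P (u x)\<bar> < e" using P(2) u(2) that unfolding \<phi>_def by blast
    then have "\<bar>\<phi> x\<bar> * \<bar>\<phi> x - P (u x)\<bar> \<le> \<bar>\<phi> x\<bar> * e" by (intro mult_left_mono) auto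
    then have "\<phi> x * (\<phi> x - P (u x)) \<le> e * \<bar>\<phi> x\<bar>"
      using abs_ge_self[of "\<phi> x * (\<phi> x - P (u x))"] by (simp add: abs_mult mult.commute)
    then show ?thesis by (simp add: power2_eq_square algebra_simps)
  qed
  have "integral {a..b} (\<lambda>x. \<phi> x ^ 2) \<le> integral {a..b} (\<lambda>x. e * \<bar>\<phi> x\<bar> + \<phi> x * P (u x))"
    by (rule integral_le[OF int_sq]) (auto intro!: integrable_add int_P int_abs bound)
  also have "\<dots> = e * integral {a..b} (\<lambda>x. \<bar>\<phi> x\<bar>) + integral {a..b} (\<lambda>x. \<phi> x * P (u x))"
    by (subst integral_add) (auto intro!: int_P int_abs)
  also have "\<dots> = e * integral {a..b} (\<lambda>x. \<bar>\<phi> x\<bar>)" using orth[OF P(1)] by (simp add: \<phi>_def)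
  finally show ?thesis by (simp add: \<phi>_def)
qed

text \<open>Consequently F \<circ> u vanishes on [a,b]: the integral of its square is zero.\<close>
lemma orthogonal_to_polynomials_imp_zero:
  fixes F u :: "real \<Rightarrow> real"
  assumes ab: "a < b" and u: "continuous_on {a..b} u" "u ` {a..b} \<subseteq> K"
    and K: "compact K" and F: "continuous_on K F"
    and orth: "\<And>P. real_polynomial_function P \<Longrightarrow> integral {a..b} (\<lambda>x. F (u x) * P (u x)) = 0"
    and x: "x \<in> {a..b}"
  shows "F (u x) = 0"
proof -
  have cont: "continuous_on {a..b} (\<lambda>x. F (u x))"
    using continuous_on_compose2[OF F u(1) u(2)] .
  have int_sq: "(\<lambda>x. F (u x) ^ 2) integrable_on {a..b}"
    and int_abs: "(\<lambda>x. \<bar>F (u x)\<bar>) integrable_on {a..b}"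
    by (auto intro!: integrable_continuous_interval continuous_intros cont)
  define I where "I = integral {a..b} (\<lambda>x. F (u x) ^ 2)"
  define J where "J = integral {a..b} (\<lambda>x. \<bar>F (u x)\<bar>)"
  have "I \<ge> 0" unfolding I_def by (rule integral_nonneg[OF int_sq]) simp
  have "J \<ge> 0" unfolding J_def by (rule integral_nonneg[OF int_abs]) simp
  have "I = 0"
  proof (rule ccontr)
    assume "I \<noteq> 0"
    with \<open>I \<ge> 0\<close> have "I > 0" by simp
    then have "I \<le> I / (J + 1) * J"
      using orthogonal_to_polynomials_square_integral_le[OF u K F orth, of "I / (J + 1)"] \<open>J \<ge> 0\<close>
      by (simp add: I_def J_def)
    also have "\<dots> < I" using \<open>I > 0\<close> \<open>J \<ge> 0\<close> by (simp add: field_simps)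
    finally show False by simp
  qed
  then have int0: "((\<lambda>x. F (u x) ^ 2) has_integral 0) (cbox a b)"
    using int_sq unfolding I_def by (simp add: has_integral_integral)
  have "(\<lambda>x. F (u x) ^ 2) x = 0"
    by (rule has_integral_0_cbox_imp_0[OF _ _ int0]) (use ab x cont in \<open>auto intro!: continuous_intros\<close>)
  then show ?thesis by simp
qed

text \<open>Uniqueness: a continuous periodic function with vanishing Fourier coefficients is zero.
  Apply the previous lemmas to the even function g(s+x) + g(s-x).\<close>
lemma fourier_coeffs_zero_imp_zero:
  fixes g :: "real \<Rightarrow> real"
  assumes T: "T > 0" and cont: "continuous_on UNIV g" and per: "\<And>x. g (x + T) = g x"
    and zero: "\<And>n. fourier_coeff T g n = 0"
  shows "g s = 0"
proof -
  define \<phi> where "\<phi> x = g (x + s) + g (s - x)" for x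
  have parts: "continuous_on UNIV (\<lambda>x. g (x + s))" "continuous_on UNIV (\<lambda>x. g (s - x))"
    by (auto intro!: continuous_intros continuous_on_compose2[OF cont])
  then have cont_\<phi>: "continuous_on UNIV \<phi>"
    unfolding \<phi>_def by (rule continuous_on_add)
  from parts have zero_\<phi>: "fourier_coeff T \<phi> n = 0" for n
    unfolding \<phi>_def
    by (simp add: fourier_coeff_add fourier_coeff_shift[OF T cont per]
        fourier_coeff_reflect[OF T cont per] zero)
  have "\<phi> (x + T) = \<phi> x" for x
  proof -
    have "g (x + T + s) = g (x + s)" using per[of "x + s"] by (simp add: algebra_simps)
    moreover have "g (s - (x + T)) = g (s - x)" using per[of "s - (x + T)"] by simp
    ultimately show ?thesis by (simp add: \<phi>_def)
  qed
  moreover have "\<phi> (-x) = \<phi> x" for x by (simp add: \<phi>_def add.commute)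
  ultimately obtain F where F: "continuous_on {-1..1} F" and \<phi>_F: "\<And>x. \<phi> x = F (cos (2*pi*x/T))"
    using even_periodic_factors_through_cos[OF T cont_\<phi>] by metis
  have "F (cos (2*pi*0/T)) = 0"
  proof (rule orthogonal_to_polynomials_imp_zero[OF T, where u = "\<lambda>x. cos (2*pi*x/T)" and K = "{-1..1}" and x = 0])
    show "continuous_on {0..T} (\<lambda>x. cos (2*pi*x/T))" using T by (intro continuous_intros) auto
    show "integral {0..T} (\<lambda>x. F (cos (2*pi*x/T)) * P (cos (2*pi*x/T))) = 0"
      if "real_polynomial_function P" for P
      using zero_coeffs_orthogonal_to_cos_polynomials[OF T cont_\<phi> zero_\<phi> that] by (simp add: \<phi>_F)
  qed (use F T in auto)
  then show ?thesis using \<phi>_F[of 0] by (simp add: \<phi>_def)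
qed

section \<open>The characteristic equation 1 + cis \<alpha> + cis \<beta> = 0\<close>

lemma cis_add_multiple_2pi: "cis (\<theta> + 2*pi * of_int j) = cis \<theta>"
  by (simp flip: cis_mult)

text \<open>If 1 + cis \<alpha> + cis \<beta> = 0 then both cosines are -1/2 and the sines are opposite:
  comparing real and imaginary parts and using the Pythagorean identity for \<beta>.\<close>
lemma cis_triple_sum_zero_imp_cos_sin:
  assumes "1 + cis \<alpha> + cis \<beta> = 0"
  shows "cos \<alpha> = -1/2" and "cos \<beta> = -1/2" and "sin \<beta> = - sin \<alpha>"
proof -
  from assms have re: "1 + cos \<alpha> + cos \<beta> = 0" and im: "sin \<beta> = - sin \<alpha>"
    by (simp_all add: complex_eq_iff)
  have "cos \<beta> = -1 - cos \<alpha>" using re by simp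
  then have "(sin \<alpha>)\<^sup>2 + (-1 - cos \<alpha>)\<^sup>2 = 1"
    using sin_cos_squared_add[of \<beta>] im by simp
  moreover have "(-1 - cos \<alpha>)\<^sup>2 = 1 + 2 * cos \<alpha> + (cos \<alpha>)\<^sup>2"
    by (simp add: power2_eq_square algebra_simps)
  ultimately show cos_\<alpha>: "cos \<alpha> = -1/2"
    using sin_cos_squared_add[of \<alpha>] by linarith
  then show "cos \<beta> = -1/2" using re by simp
  show "sin \<beta> = - sin \<alpha>" by (rule im)
qed

lemma cis_triple_sum_zero_iff:
  "1 + cis \<alpha> + cis \<beta> = 0 \<longleftrightarrow>
     (\<exists>j k :: int. \<alpha> = 2*pi/3 + 2*pi * of_int j \<and> \<beta> = -(2*pi/3) + 2*pi * of_int k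
                 \<or> \<alpha> = -(2*pi/3) + 2*pi * of_int j \<and> \<beta> = 2*pi/3 + 2*pi * of_int k)"
    (is "?sum \<longleftrightarrow> ?angles")
proof
  have cos3: "cos (2*pi/3) = -1/2" and sin3: "sin (2*pi/3) = sqrt 3 / 2"
    using cos_120' sin_120' by (simp_all add: mult.commute)
  assume ?sum
  note cos_\<alpha> = cis_triple_sum_zero_imp_cos_sin(1)[OF this]
    and cos_\<beta> = cis_triple_sum_zero_imp_cos_sin(2)[OF this]
    and im = cis_triple_sum_zero_imp_cos_sin(3)[OF this]
  have "(sin \<alpha>)\<^sup>2 = (sqrt 3 / 2)\<^sup>2"
    using sin_cos_squared_add[of \<alpha>] cos_\<alpha> by (simp add: power_divide)
  then consider "sin \<alpha> = sqrt 3 / 2" | "sin \<alpha> = - (sqrt 3 / 2)"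
    using power2_eq_iff by blast
  then show ?angles
  proof cases
    case 1
    obtain j :: int where "\<alpha> = 2*pi/3 + 2*pi * of_int j"
      using sin_cos_eq_iff[of \<alpha> "2*pi/3"] 1 cos_\<alpha> cos3 sin3 by auto
    moreover obtain k :: int where "\<beta> = -(2*pi/3) + 2*pi * of_int k"
      using sin_cos_eq_iff[of \<beta> "-(2*pi/3)"] 1 im cos_\<beta> cos3 sin3 by auto
    ultimately show ?angles by blast
  next
    case 2
    obtain j :: int where "\<alpha> = -(2*pi/3) + 2*pi * of_int j"
      using sin_cos_eq_iff[of \<alpha> "-(2*pi/3)"] 2 cos_\<alpha> cos3 sin3 by auto
    moreover obtain k :: int where "\<beta> = 2*pi/3 + 2*pi * of_int k"
      using sin_cos_eq_iff[of \<beta> "2*pi/3"] 2 im cos_\<beta> cos3 sin3 by auto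
    ultimately show ?angles by blast
  qed
next
  have cube_roots: "1 + cis (2*pi/3) + cis (-(2*pi/3)) = 0"
    using cos_120' by (simp add: complex_eq_iff mult.commute)
  assume ?angles
  then show ?sum
    by (elim exE disjE conjE, simp_all only: cis_add_multiple_2pi) (use cube_roots in \<open>simp_all add: add_ac\<close>)
qed

lemma ratio_set_denominators_nonzero:
  fixes m k :: int
  shows "1 + 3 * real_of_int m \<noteq> 0" and "2 + 3 * real_of_int k \<noteq> 0"
proof -
  have "1 + 3 * m \<noteq> 0" and "2 + 3 * k \<noteq> 0" by presburger+
  then have "real_of_int (1 + 3 * m) \<noteq> 0" and "real_of_int (2 + 3 * k) \<noteq> 0"
    by simp_all
  then show "1 + 3 * real_of_int m \<noteq> 0" and "2 + 3 * real_of_int k \<noteq> 0"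
    by simp_all
qed

text \<open>Every exceptional ratio a/b admits a frequency l solving the characteristic equation:
  choose l so that l*b is 2\<pi>/3 times the denominator; then l*a is 2\<pi>/3 times the numerator,
  and the two integers have residues 1 and 2 modulo 3.\<close>
lemma ratio_set_imp_frequency:
  assumes b: "b > 0" and "a / b \<in> ratio_set"
  shows "\<exists>l. 1 + cis (l * a) + cis (l * b) = 0"
proof -
  obtain m k :: int where
    "a / b = (2 + 3 * of_int k) / (1 + 3 * of_int m) \<or> a / b = (1 + 3 * of_int m) / (2 + 3 * of_int k)"
    using assms(2) unfolding ratio_set_def by blast
  then show ?thesis
  proof
    assume ratio: "a / b = (2 + 3 * of_int k) / (1 + 3 * of_int m)"
    define l where "l = (2*pi/3 + 2*pi * of_int m) / b"
    have lb: "l * b = 2*pi/3 + 2*pi * of_int m" using b by (simp add: l_def)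
    have "l * a = l * b * (a / b)" using b by simp
    also have "\<dots> = -(2*pi/3) + 2*pi * of_int (k + 1)"
      unfolding lb ratio using ratio_set_denominators_nonzero(1)[of m] by (simp add: field_simps)
    finally show ?thesis using lb cis_triple_sum_zero_iff by blast
  next
    assume ratio: "a / b = (1 + 3 * of_int m) / (2 + 3 * of_int k)"
    define l where "l = (-(2*pi/3) + 2*pi * of_int (k + 1)) / b"
    have lb: "l * b = -(2*pi/3) + 2*pi * of_int (k + 1)" using b by (simp add: l_def)
    have "l * a = l * b * (a / b)" using b by simp
    also have "\<dots> = 2*pi/3 + 2*pi * of_int m"
      unfolding lb ratio using ratio_set_denominators_nonzero(2)[of k] by (simp add: field_simps)
    finally show ?thesis using lb cis_triple_sum_zero_iff by blast
  qed
qed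

text \<open>Conversely, a frequency l solving the characteristic equation makes l*a and l*b equal
  to 2\<pi>/3 times integers with residues 1 and 2 modulo 3, so a/b is exceptional.\<close>
lemma frequency_imp_ratio_set:
  assumes l: "1 + cis (l * a) + cis (l * b) = 0"
  shows "a / b \<in> ratio_set"
proof -
  have "l \<noteq> 0"
  proof
    assume "l = 0"
    with l show False by (simp add: complex_eq_iff)
  qed
  then have ab: "a / b = (l * a) / (l * b)" by simp
  obtain j k :: int where
    "l * a = 2*pi/3 + 2*pi * of_int j \<and> l * b = -(2*pi/3) + 2*pi * of_int k
     \<or> l * a = -(2*pi/3) + 2*pi * of_int j \<and> l * b = 2*pi/3 + 2*pi * of_int k"
    using l cis_triple_sum_zero_iff by blast
  then show ?thesis
  proof (elim disjE conjE)
    assume "l * a = 2*pi/3 + 2*pi * of_int j" and "l * b = -(2*pi/3) + 2*pi * of_int k"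
    then have la: "l * a = 2*pi/3 * (1 + 3 * of_int j)" and lb: "l * b = 2*pi/3 * (2 + 3 * of_int (k - 1))"
      by (simp_all add: algebra_simps)
    have "a / b = (2*pi/3 * (1 + 3 * of_int j)) / (2*pi/3 * (2 + 3 * of_int (k - 1)))"
      unfolding ab la lb ..
    also have "\<dots> = (1 + 3 * of_int j) / (2 + 3 * of_int (k - 1))"
      by (rule mult_divide_mult_cancel_left) simp
    finally have "a / b = (1 + 3 * of_int j) / (2 + 3 * of_int (k - 1))" .
    then show ?thesis unfolding ratio_set_def by blast
  next
    assume "l * a = -(2*pi/3) + 2*pi * of_int j" and "l * b = 2*pi/3 + 2*pi * of_int k"
    then have la: "l * a = 2*pi/3 * (2 + 3 * of_int (j - 1))" and lb: "l * b = 2*pi/3 * (1 + 3 * of_int k)"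
      by (simp_all add: algebra_simps)
    have "a / b = (2*pi/3 * (2 + 3 * of_int (j - 1))) / (2*pi/3 * (1 + 3 * of_int k))"
      unfolding ab la lb ..
    also have "\<dots> = (2 + 3 * of_int (j - 1)) / (1 + 3 * of_int k)"
      by (rule mult_divide_mult_cancel_left) simp
    finally have "a / b = (2 + 3 * of_int (j - 1)) / (1 + 3 * of_int k)" .
    then show ?thesis unfolding ratio_set_def by blast
  qed
qed

lemma ratio_set_iff_frequency:
  assumes "b > 0"
  shows "a / b \<in> ratio_set \<longleftrightarrow> (\<exists>l. 1 + cis (l * a) + cis (l * b) = 0)"
  using ratio_set_imp_frequency[OF assms] frequency_imp_ratio_set by blast

section \<open>Periodic solutions of g(x) + g(x+a) + g(x+b) = 0\<close>

lemma fourier_coeff_of_solution: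
  fixes n :: int
  assumes T: "T > 0" and cont: "continuous_on UNIV g" and per: "\<And>x. g (x + T) = g x"
    and sol: "\<And>x. g x + g (x + a) + g (x + b) = 0"
  defines "l \<equiv> -(2*pi * of_int n / T)"
  shows "(1 + cis (l * a) + cis (l * b)) * fourier_coeff T g n = 0"
proof -
  have shifted: "continuous_on UNIV (\<lambda>x. g (x + d))" for d
    by (auto intro!: continuous_intros continuous_on_compose2[OF cont])
  have shift: "fourier_coeff T (\<lambda>x. g (x + d)) n = cis (l * d) * fourier_coeff T g n" for d
    unfolding fourier_coeff_shift[OF T cont per] l_def by simp
  have "0 = fourier_coeff T (\<lambda>x. g x + g (x + a) + g (x + b)) n"
    by (simp add: sol fourier_coeff_def)
  also have "\<dots> = fourier_coeff T g n + fourier_coeff T (\<lambda>x. g (x + a)) n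
                  + fourier_coeff T (\<lambda>x. g (x + b)) n"
    by (simp add: fourier_coeff_add cont shifted continuous_on_add)
  also have "\<dots> = (1 + cis (l * a) + cis (l * b)) * fourier_coeff T g n"
    by (simp add: shift algebra_simps)
  finally show ?thesis by simp
qed

text \<open>For l \<noteq> 0 the function cos(lx) is periodic, with period 2\<pi>/|l|.  (The predicate is
  qualified since HOL-Library.Periodic_Fun has a locale of the same name.)\<close>
lemma cos_scaled_periodic:
  fixes l :: real
  assumes "l \<noteq> 0"
  shows "Defs.periodic_fun (\<lambda>x. cos (l * x))"
proof -
  have "cos (l * (x + 2*pi / \<bar>l\<bar>)) = cos (l * x)" for x
  proof (cases "l > 0")
    case True
    then have "l * (x + 2*pi / \<bar>l\<bar>) = l * x + 2*pi" by (simp add: field_simps)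
    then show ?thesis by simp
  next
    case False
    with assms have "l * (x + 2*pi / \<bar>l\<bar>) + 2*pi = l * x" by (simp add: field_simps)
    then show ?thesis by (metis cos_periodic)
  qed
  then show ?thesis
    unfolding Defs.periodic_fun_def using assms by (intro exI[of _ "2*pi / \<bar>l\<bar>"]) auto
qed

text \<open>A frequency l solving the characteristic equation gives the solution cos(lx), the
  real part of cis(lx).\<close>
lemma frequency_gives_solution:
  assumes l: "1 + cis (l * a) + cis (l * b) = 0"
  shows "has_nonzero_cont_periodic_sol a b"
proof -
  have "cos (l * x) + cos (l * (x + a)) + cos (l * (x + b)) = Re (cis (l * x) * (1 + cis (l * a) + cis (l * b)))" for x
    by (simp add: distrib_left cos_add)
  then have sol: "cos (l * x) + cos (l * (x + a)) + cos (l * (x + b)) = 0" for x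
    by (simp add: l)
  from l have "l \<noteq> 0" by (auto simp: complex_eq_iff)
  then have "Defs.periodic_fun (\<lambda>x. cos (l * x))" by (rule cos_scaled_periodic)
  moreover have "continuous_on UNIV (\<lambda>x. cos (l * x))" by (intro continuous_intros)
  moreover have "cos (l * 0) \<noteq> 0" by simp
  ultimately show ?thesis
    unfolding has_nonzero_cont_periodic_sol_def using sol by blast
qed

text \<open>Conversely a nonzero solution has a nonzero Fourier coefficient, whose index yields a
  frequency solving the characteristic equation.\<close>
lemma has_nonzero_cont_periodic_sol_iff_frequency:
  "has_nonzero_cont_periodic_sol a b \<longleftrightarrow> (\<exists>l. 1 + cis (l * a) + cis (l * b) = 0)"
proof
  assume "has_nonzero_cont_periodic_sol a b"
  then obtain g where cont: "continuous_on UNIV g" and "Defs.periodic_fun g" and "\<exists>x. g x \<noteq> 0"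
    and sol: "\<And>x. g x + g (x + a) + g (x + b) = 0"
    unfolding has_nonzero_cont_periodic_sol_def by blast
  then obtain T s where T: "T > 0" and per: "\<And>x. g (x + T) = g x" and "g s \<noteq> 0"
    unfolding Defs.periodic_fun_def by blast
  then obtain n where "fourier_coeff T g n \<noteq> 0"
    using fourier_coeffs_zero_imp_zero[OF T cont per] by blast
  then have "1 + cis (-(2*pi * of_int n / T) * a) + cis (-(2*pi * of_int n / T) * b) = 0"
    using fourier_coeff_of_solution[OF T cont per sol, of n] by simp
  then show "\<exists>l. 1 + cis (l * a) + cis (l * b) = 0" by blast
qed (blast intro: frequency_gives_solution)

section \<open>Arithmetic of the exceptional ratios\<close>

lemma ratio_set_subset_Rats: "ratio_set \<subseteq> \<rat>"
  unfolding ratio_set_def by (auto intro!: Rats_divide Rats_add Rats_mult)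

text \<open>No multiple of 3 is an exceptional ratio: in a fraction from ratio_set the numerator
  is not divisible by 3, while the denominator is prime to 3.\<close>
lemma multiple_of_three_notin_ratio_set: "3 * real n \<notin> ratio_set"
proof
  assume "3 * real n \<in> ratio_set"
  then obtain m k :: int where
    "3 * real n = (2 + 3 * of_int k) / (1 + 3 * of_int m) \<or> 3 * real n = (1 + 3 * of_int m) / (2 + 3 * of_int k)"
    unfolding ratio_set_def by blast
  then have "real_of_int (3 * (int n * (1 + 3 * m))) = real_of_int (2 + 3 * k)
           \<or> real_of_int (3 * (int n * (2 + 3 * k))) = real_of_int (1 + 3 * m)"
    using ratio_set_denominators_nonzero(1)[of m] ratio_set_denominators_nonzero(2)[of k] by (auto simp: field_simps)
  then have "3 * (int n * (1 + 3 * m)) = 2 + 3 * k \<or> 3 * (int n * (2 + 3 * k)) = 1 + 3 * m"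
    by (simp only: of_int_eq_iff)
  then show False by presburger
qed

theorem mainTheorem8:
  fixes a b :: real
  assumes "b > 0"
  shows "(has_nonzero_cont_periodic_sol a b \<longleftrightarrow> a / b \<in> ratio_set)
    \<and> (a / b \<notin> \<rat> \<longrightarrow> \<not> has_nonzero_cont_periodic_sol a b)
    \<and> infinite {r \<in> \<rat>. \<forall>a' b' :: real. b' > 0 \<and> a' / b' = r \<longrightarrow> \<not> has_nonzero_cont_periodic_sol a' b'}"
proof (intro conjI)
  have iff: "has_nonzero_cont_periodic_sol a' b' \<longleftrightarrow> a' / b' \<in> ratio_set" if "b' > 0" for a' b'
    using has_nonzero_cont_periodic_sol_iff_frequency ratio_set_iff_frequency[OF that] by blast
  show "has_nonzero_cont_periodic_sol a b \<longleftrightarrow> a / b \<in> ratio_set"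
    using iff[OF assms] .
  show "a / b \<notin> \<rat> \<longrightarrow> \<not> has_nonzero_cont_periodic_sol a b"
    using iff[OF assms] ratio_set_subset_Rats by blast
  have "range (\<lambda>n::nat. 3 * real n)
      \<subseteq> {r \<in> \<rat>. \<forall>a' b' :: real. b' > 0 \<and> a' / b' = r \<longrightarrow> \<not> has_nonzero_cont_periodic_sol a' b'}"
    using iff multiple_of_three_notin_ratio_set by auto
  moreover have "infinite (range (\<lambda>n::nat. 3 * real n))"
    by (rule range_inj_infinite) (auto simp: inj_on_def)
  ultimately show "infinite {r \<in> \<rat>. \<forall>a' b' :: real. b' > 0 \<and> a' / b' = r \<longrightarrow> \<not> has_nonzero_cont_periodic_sol a' b'}"
    using infinite_super by blast
qed

end
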